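(* Let $(X,d)$ be a compact metric space and $f:X\to X$ continuous. If $(x,y)\in X^2$ is a proximal pair for $f$, i.e. $\liminf_{n\to\infty}d(f^n(x),f^n(y))=0$, then every $(z,w)\in\omega((x,y),f\times f)$ lies in $CR(f)^2$ and satisfies $z\sim w$.
   Context: $\omega((x,y),f\times f)$ is the $\omega$-limit set of $(x,y)$ under $f\times f$, i.e. the set of limits of $(f^{n_j}(x),f^{n_j}(y))$ along sequences $n_j\to\infty$. A $\delta$-chain of $f$ is a finite sequence $(x_i)_{i=0}^k$, $k\ge1$, with $d(f(x_i),x_{i+1})\le\delta$; a $\delta$-cycle is a $\delta$-chain with $x_0=x_k$. $CR(f)$ is the set of points $x$ such that for every $\delta>0$ there is a $\delta$-cycle starting and ending at $x$. For $x,y\in CR(f)$, $x\sim y$ iff for every $\delta>0$ there are integers $m>0$, $N>0$ such that for every $n\ge N$ there are $\delta$-chains $(x_i)_{i=0}^{mn},(y_i)_{i=0}^{mn}$ in $CR(f)$ with $x_0=y_{mn}=x$, $x_{mn}=y_0=y$. *)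

theory Defs
  imports "HOL-Analysis.Analysis" "HOL-Library.Liminf_Limsup"
begin

definition delta_chain :: "'a set \<Rightarrow> ('a \<Rightarrow> 'a) \<Rightarrow> real \<Rightarrow> (nat \<Rightarrow> 'a::metric_space) \<Rightarrow> nat \<Rightarrow> bool" where
  "delta_chain X f \<delta> xs k \<longleftrightarrow> k \<ge> 1 \<and> (\<forall>i\<le>k. xs i \<in> X) \<and>
     (\<forall>i<k. dist (f (xs i)) (xs (Suc i)) \<le> \<delta>)"

definition CR :: "'a set \<Rightarrow> ('a \<Rightarrow> 'a) \<Rightarrow> 'a::metric_space set" where
  "CR X f = {x \<in> X. \<forall>\<delta>>0. \<exists>xs k. delta_chain X f \<delta> xs k \<and> xs 0 = x \<and> xs k = x}"

definition CR_rel :: "'a set \<Rightarrow> ('a \<Rightarrow> 'a) \<Rightarrow> 'a::metric_space \<Rightarrow> 'a \<Rightarrow> bool" where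
  "CR_rel X f x y \<longleftrightarrow> x \<in> CR X f \<and> y \<in> CR X f \<and>
     (\<forall>\<delta>>0. \<exists>m::nat. m > 0 \<and> (\<exists>N::nat. N > 0 \<and> (\<forall>n\<ge>N.
        \<exists>xs ys. delta_chain X f \<delta> xs (m*n) \<and> delta_chain X f \<delta> ys (m*n) \<and>
          (\<forall>i\<le>m*n. xs i \<in> CR X f \<and> ys i \<in> CR X f) \<and>
          xs 0 = x \<and> ys (m*n) = x \<and> xs (m*n) = y \<and> ys 0 = y)))"

definition omega_limit :: "('b \<Rightarrow> 'b) \<Rightarrow> 'b::topological_space \<Rightarrow> 'b set" where
  "omega_limit g p = {q. \<exists>r. strict_mono r \<and> ((\<lambda>j. (g ^^ r j) p) \<longlongrightarrow> q) sequentially}"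

end

theory Submission
  imports Defs
begin

text \<open>
  The \<omega>-limit set \<Omega> of (x, y) under f \<times> f is internally chain transitive: any two of its points
  are joined by \<delta>-chains inside \<Omega>, obtained by shadowing a long orbit segment. Projecting such
  chains to either coordinate shows that the coordinates of points of \<Omega> are chain recurrent.
  Proximality puts a diagonal point (p, p) into \<Omega>. Chains in \<Omega> from (z, w) to (p, p) and back
  form a loop of some length m; running it n times and exchanging the coordinates when the loop
  passes (p, p) for the last time yields \<delta>-chains of length m n from z to w and from w to z.
\<close>

definition internally_chain_transitive :: "'a::metric_space set \<Rightarrow> ('a \<Rightarrow> 'a) \<Rightarrow> bool" where
  "internally_chain_transitive S g \<longleftrightarrow>
     (\<forall>a\<in>S. \<forall>b\<in>S. \<forall>\<delta>>0. \<exists>cs k. delta_chain S g \<delta> cs k \<and> cs 0 = a \<and> cs k = b)"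

lemma CR_subset: "CR X f \<subseteq> X"
  by (auto simp: CR_def)

lemma delta_chain_mono:
  assumes "delta_chain A f \<delta> xs k" and "A \<subseteq> B"
  shows "delta_chain B f \<delta> xs k"
  using assms by (auto simp: delta_chain_def)

lemma delta_chain_append:
  assumes "delta_chain S f \<delta> as k" and "delta_chain S f \<delta> bs l" and "as k = bs 0"
  shows "delta_chain S f \<delta> (\<lambda>i. if i \<le> k then as i else bs (i - k)) (k + l)"
  unfolding delta_chain_def
proof (intro conjI allI impI)
  show "1 \<le> k + l" using assms(1) by (simp add: delta_chain_def)
  show "(if i \<le> k then as i else bs (i - k)) \<in> S" if "i \<le> k + l" for i
    using assms that by (auto simp: delta_chain_def)
  show "dist (f (if i \<le> k then as i else bs (i - k)))
          (if Suc i \<le> k then as (Suc i) else bs (Suc i - k)) \<le> \<delta>" if "i < k + l" for i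
  proof (cases "i < k")
    case True
    then show ?thesis using assms(1) by (simp add: delta_chain_def)
  next
    case False
    then have "i - k < l" "Suc i - k = Suc (i - k)" using that by auto
    moreover have "(if i \<le> k then as i else bs (i - k)) = bs (i - k)"
      using False assms(3) by auto
    ultimately show ?thesis using False assms(2) by (simp add: delta_chain_def)
  qed
qed

lemma delta_chain_repeat:
  assumes "delta_chain S f \<delta> cs L" and "cs L = cs 0" and "n \<ge> 1"
  shows "delta_chain S f \<delta> (\<lambda>i. cs (i mod L)) (L * n)"
proof -
  have L: "L \<ge> 1" using assms(1) by (simp add: delta_chain_def)
  have "cs (Suc i mod L) = cs (Suc (i mod L))" for i
    using assms(2) by (simp add: mod_Suc)
  moreover have "i mod L < L" for i using L by simp
  ultimately show ?thesis
    using assms L unfolding delta_chain_def by (auto simp: less_imp_le)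
qed

lemma delta_chain_pair_stepD:
  assumes "delta_chain S (\<lambda>(a, b). (f a, f b)) \<delta> cs k" and "i < k"
  shows "dist (f (fst (cs i))) (fst (cs (Suc i))) \<le> \<delta>"
    and "dist (f (snd (cs i))) (snd (cs (Suc i))) \<le> \<delta>"
  using assms dist_fst_le[of "(\<lambda>(a, b). (f a, f b)) (cs i)" "cs (Suc i)"]
    dist_snd_le[of "(\<lambda>(a, b). (f a, f b)) (cs i)" "cs (Suc i)"]
  by (auto simp: delta_chain_def case_prod_beta)

lemma delta_chain_fst:
  assumes "delta_chain S (\<lambda>(a, b). (f a, f b)) \<delta> cs k" and "fst ` S \<subseteq> A"
  shows "delta_chain A f \<delta> (\<lambda>i. fst (cs i)) k"
  using assms delta_chain_pair_stepD(1)[OF assms(1)] by (auto simp: delta_chain_def)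

lemma delta_chain_switch:
  assumes chain: "delta_chain S (\<lambda>(a, b). (f a, f b)) \<delta> cs k"
    and "S \<subseteq> A \<times> A" and diag: "fst (cs t) = snd (cs t)"
  shows "delta_chain A f \<delta> (\<lambda>i. if i \<le> t then fst (cs i) else snd (cs i)) k"
proof -
  have "dist (f (if i \<le> t then fst (cs i) else snd (cs i)))
          (if Suc i \<le> t then fst (cs (Suc i)) else snd (cs (Suc i))) \<le> \<delta>" if "i < k" for i
    using delta_chain_pair_stepD[OF chain that] diag by (cases "i < t") auto
  then show ?thesis using chain assms(2) by (auto simp: delta_chain_def)
qed

lemma dist_swap: "dist (prod.swap u) (prod.swap v) = dist u v"
  by (cases u; cases v) (simp add: dist_Pair_Pair add.commute)

lemma delta_chain_swap:
  assumes "delta_chain S (\<lambda>(a, b). (f a, f b)) \<delta> cs k"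
  shows "delta_chain (prod.swap ` S) (\<lambda>(a, b). (f a, f b)) \<delta> (\<lambda>i. prod.swap (cs i)) k"
proof -
  have "(\<lambda>(a, b). (f a, f b)) (prod.swap c) = prod.swap ((\<lambda>(a, b). (f a, f b)) c)" for c
    by (simp add: case_prod_beta)
  then show ?thesis using assms by (auto simp: delta_chain_def dist_swap)
qed

lemma funpow_in_invariant: "g ` K \<subseteq> K \<Longrightarrow> p \<in> K \<Longrightarrow> (g ^^ n) p \<in> K"
  by (induction n) auto

lemma omega_limit_subset:
  assumes "closed K" and "\<And>n. (g ^^ n) p \<in> K"
  shows "omega_limit g p \<subseteq> K"
proof
  fix q assume "q \<in> omega_limit g p"
  then obtain r where "(\<lambda>j. (g ^^ r j) p) \<longlonglongrightarrow> q" by (auto simp: omega_limit_def)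
  then show "q \<in> K" using assms by (rule closed_sequentially[rotated 2])
qed

lemma omega_limit_subseq:
  fixes g :: "'b::metric_space \<Rightarrow> 'b" and r :: "nat \<Rightarrow> nat"
  assumes "compact K" and "\<And>n. (g ^^ n) p \<in> K" and "strict_mono r"
  obtains s l where "strict_mono s" and "l \<in> omega_limit g p"
    and "(\<lambda>j. (g ^^ r (s j)) p) \<longlonglongrightarrow> l"
proof -
  obtain l s where s: "strict_mono s" "((\<lambda>n. (g ^^ r n) p) \<circ> s) \<longlonglongrightarrow> l"
    using seq_compactE[OF compact_imp_seq_compact[OF assms(1)], of "\<lambda>n. (g ^^ r n) p"] assms(2)
    by metis
  moreover have "l \<in> omega_limit g p"
    unfolding omega_limit_def
    using s assms(3) by (auto intro!: exI[of _ "r \<circ> s"] strict_mono_o simp: o_def)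
  ultimately show ?thesis using that by (simp add: o_def)
qed

lemma omega_limit_frequently_near:
  assumes "q \<in> omega_limit g p" and "e > 0"
  shows "\<exists>n\<ge>T. dist ((g ^^ n) p) q < e"
proof -
  obtain r where r: "strict_mono r" "(\<lambda>j. (g ^^ r j) p) \<longlonglongrightarrow> q"
    using assms(1) by (auto simp: omega_limit_def)
  then have "\<forall>\<^sub>F j in sequentially. dist ((g ^^ r j) p) q < e"
    using assms(2) by (simp add: tendsto_iff)
  then obtain J where J: "\<And>j. j \<ge> J \<Longrightarrow> dist ((g ^^ r j) p) q < e"
    by (auto simp: eventually_sequentially)
  have "r (max J T) \<ge> T" using seq_suble[OF r(1), of "max J T"] by linarith
  then show ?thesis using J[of "max J T"] by auto
qed

lemma omega_limit_eventually_near: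
  fixes g :: "'b::metric_space \<Rightarrow> 'b"
  assumes "compact K" and "\<And>n. (g ^^ n) p \<in> K" and "e > 0"
  shows "\<exists>T. \<forall>n\<ge>T. \<exists>c\<in>omega_limit g p. dist c ((g ^^ n) p) < e"
proof (rule ccontr)
  define far where "far = {n. \<forall>c\<in>omega_limit g p. e \<le> dist c ((g ^^ n) p)}"
  assume "\<not> ?thesis"
  then have "\<forall>T. \<exists>n\<ge>T. n \<in> far" by (simp add: far_def not_less)
  then have "infinite far" by (simp add: infinite_nat_iff_unbounded_le)
  then obtain r :: "nat \<Rightarrow> nat" where r: "strict_mono r" "\<And>j. r j \<in> far"
    using infinite_enumerate by blast
  obtain s l where s: "strict_mono s" "l \<in> omega_limit g p"
    and lim: "(\<lambda>j. (g ^^ r (s j)) p) \<longlonglongrightarrow> l"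
    using omega_limit_subseq[OF assms(1,2) r(1)] .
  have "\<forall>\<^sub>F j in sequentially. dist ((g ^^ r (s j)) p) l < e"
    using lim assms(3) by (simp add: tendsto_iff)
  then obtain J where "dist ((g ^^ r (s J)) p) l < e"
    by (auto simp: eventually_sequentially)
  moreover have "e \<le> dist l ((g ^^ r (s J)) p)"
    using r(2)[of "s J"] s(2) by (simp add: far_def)
  ultimately show False by (simp add: dist_commute)
qed

lemma omega_limit_internally_chain_transitive:
  fixes g :: "'b::metric_space \<Rightarrow> 'b"
  assumes K: "compact K" and g: "continuous_on K g" "g ` K \<subseteq> K" and "p \<in> K"
  shows "internally_chain_transitive (omega_limit g p) g"
  unfolding internally_chain_transitive_def
proof (intro ballI allI impI)
  fix a b and \<delta> :: real
  let ?\<Omega> = "omega_limit g p"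
  assume a: "a \<in> ?\<Omega>" and b: "b \<in> ?\<Omega>" and "\<delta> > 0"
  have orbit: "(g ^^ n) p \<in> K" for n by (rule funpow_in_invariant[OF g(2) \<open>p \<in> K\<close>])
  have \<Omega>K: "?\<Omega> \<subseteq> K" using omega_limit_subset[OF compact_imp_closed[OF K] orbit] .
  obtain d where d: "d > 0"
    "\<And>u v. u \<in> K \<Longrightarrow> v \<in> K \<Longrightarrow> dist v u < d \<Longrightarrow> dist (g v) (g u) < \<delta>/2"
    using compact_uniformly_continuous[OF g(1) K] \<open>\<delta> > 0\<close>
    unfolding uniformly_continuous_on_def by (metis half_gt_zero)
  define e where "e = min d (\<delta>/2)"
  have e: "e > 0" "e \<le> d" "e \<le> \<delta>/2" using d \<open>\<delta> > 0\<close> by (auto simp: e_def)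
  obtain T c where c: "\<And>n. n \<ge> T \<Longrightarrow> c n \<in> ?\<Omega> \<and> dist (c n) ((g ^^ n) p) < e"
    using omega_limit_eventually_near[OF K orbit e(1)] by metis
  obtain n1 where n1: "n1 \<ge> T" "dist ((g ^^ n1) p) a < e"
    using omega_limit_frequently_near[OF a e(1)] by blast
  obtain n2 where n2: "n2 \<ge> Suc n1" "dist ((g ^^ n2) p) b < e"
    using omega_limit_frequently_near[OF b e(1)] by blast
  \<comment> \<open>shadow the orbit segment from time n1 to n2 by points of the limit set\<close>
  define k where "k = n2 - n1"
  define cs where "cs i = (if i = 0 then a else if i = k then b else c (n1 + i))" for i
  have near: "cs i \<in> ?\<Omega> \<and> dist (cs i) ((g ^^ (n1 + i)) p) < e" if "i \<le> k" for i
    using a b n1 n2 c[of "n1 + i"] that by (auto simp: cs_def k_def dist_commute)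
  have "dist (g (cs i)) (cs (Suc i)) \<le> \<delta>" if "i < k" for i
  proof -
    have "dist (g (cs i)) ((g ^^ (n1 + Suc i)) p) < \<delta>/2"
      using d(2)[of "(g ^^ (n1 + i)) p" "cs i"] near[of i] \<Omega>K orbit e that by auto
    moreover have "dist (cs (Suc i)) ((g ^^ (n1 + Suc i)) p) < e"
      using near[of "Suc i"] that by simp
    ultimately show ?thesis
      using dist_triangle2[of "g (cs i)" "cs (Suc i)" "(g ^^ (n1 + Suc i)) p"] e(3) by linarith
  qed
  moreover have "k \<ge> 1" using n2 by (simp add: k_def)
  ultimately show "\<exists>cs k. delta_chain ?\<Omega> g \<delta> cs k \<and> cs 0 = a \<and> cs k = b"
    using near by (intro exI[of _ cs] exI[of _ k]) (auto simp: delta_chain_def cs_def)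
qed

lemma internally_chain_transitive_loop:
  assumes "internally_chain_transitive S g" and "u \<in> S" and "v \<in> S" and "\<delta> > 0"
  obtains cs L t where "delta_chain S g \<delta> cs L" and "cs 0 = u" and "cs L = u"
    and "t < L" and "cs t = v"
proof -
  obtain as k where as: "delta_chain S g \<delta> as k" "as 0 = u" "as k = v"
    using assms unfolding internally_chain_transitive_def by blast
  obtain bs l where bs: "delta_chain S g \<delta> bs l" "bs 0 = v" "bs l = u"
    using assms unfolding internally_chain_transitive_def by blast
  have "k \<ge> 1" "l \<ge> 1" using as(1) bs(1) by (auto simp: delta_chain_def)
  then show ?thesis
    using that[OF delta_chain_append[OF as(1) bs(1)], of k] as bs by auto
qed

lemma delta_chains_exchange_through_diagonal:
  assumes chain: "delta_chain S (\<lambda>(a, b). (f a, f b)) \<delta> cs L" and S: "S \<subseteq> A \<times> A"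
    and ends: "cs 0 = (z, w)" "cs L = (z, w)" and diag: "t < L" "cs t = (p, p)"
    and "n \<ge> 1"
  shows "\<exists>xs ys. delta_chain A f \<delta> xs (L * n) \<and> delta_chain A f \<delta> ys (L * n) \<and>
           xs 0 = z \<and> xs (L * n) = w \<and> ys 0 = w \<and> ys (L * n) = z"
proof -
  define es where "es i = cs (i mod L)" for i
  have es: "delta_chain S (\<lambda>(a, b). (f a, f b)) \<delta> es (L * n)"
    unfolding es_def using delta_chain_repeat[OF chain _ \<open>n \<ge> 1\<close>] ends by simp
  \<comment> \<open>the last round passes the diagonal at time s, where the coordinates are exchanged\<close>
  define s where "s = (n - 1) * L + t"
  have "s < L * n" using diag(1) \<open>n \<ge> 1\<close> by (cases n) (auto simp: s_def algebra_simps)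
  have "es s = (p, p)" using diag by (simp add: es_def s_def)
  define xs where "xs i = (if i \<le> s then fst (es i) else snd (es i))" for i
  define ys where "ys i = (if i \<le> s then snd (es i) else fst (es i))" for i
  have swapS: "prod.swap ` S \<subseteq> A \<times> A" using S by auto
  have "delta_chain A f \<delta> ys (L * n)"
    unfolding ys_def using delta_chain_switch[OF delta_chain_swap[OF es] swapS, of s] \<open>es s = (p, p)\<close>
    by (simp cong: if_cong)
  moreover have "delta_chain A f \<delta> xs (L * n)"
    unfolding xs_def using delta_chain_switch[OF es S, of s] \<open>es s = (p, p)\<close> by simp
  moreover have "xs 0 = z" "xs (L * n) = w" "ys 0 = w" "ys (L * n) = z"
    using ends \<open>s < L * n\<close> by (simp_all add: xs_def ys_def es_def)
  ultimately show ?thesis by blast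
qed

lemma internally_chain_transitive_subset_CR:
  assumes ict: "internally_chain_transitive S (\<lambda>(a, b). (f a, f b))" and S: "S \<subseteq> X \<times> X"
  shows "S \<subseteq> CR X f \<times> CR X f"
proof
  fix q assume "q \<in> S"
  have chains: "(\<exists>xs k. delta_chain X f \<delta> xs k \<and> xs 0 = fst q \<and> xs k = fst q) \<and>
        (\<exists>xs k. delta_chain X f \<delta> xs k \<and> xs 0 = snd q \<and> xs k = snd q)" if "\<delta> > 0" for \<delta>
  proof -
    obtain cs k where cs: "delta_chain S (\<lambda>(a, b). (f a, f b)) \<delta> cs k" "cs 0 = q" "cs k = q"
      using ict \<open>q \<in> S\<close> \<open>\<delta> > 0\<close> unfolding internally_chain_transitive_def by blast
    have "fst ` S \<subseteq> X" "fst ` prod.swap ` S \<subseteq> X" using S by auto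
    then have "delta_chain X f \<delta> (\<lambda>i. fst (cs i)) k" "delta_chain X f \<delta> (\<lambda>i. snd (cs i)) k"
      using delta_chain_fst[OF cs(1)] delta_chain_fst[OF delta_chain_swap[OF cs(1)]] by simp_all
    then show ?thesis
      using cs(2,3) by (intro conjI exI[of _ "\<lambda>i. fst (cs i)"] exI[of _ "\<lambda>i. snd (cs i)"]
          exI[of _ k]) simp_all
  qed
  have "fst q \<in> X" "snd q \<in> X" using \<open>q \<in> S\<close> S by auto
  with chains show "q \<in> CR X f \<times> CR X f" unfolding CR_def by (simp add: mem_Times_iff)
qed

lemma CR_rel_if_internally_chain_transitive:
  assumes ict: "internally_chain_transitive S (\<lambda>(a, b). (f a, f b))"
    and S: "S \<subseteq> CR X f \<times> CR X f" and "(p, p) \<in> S" and "(z, w) \<in> S"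
  shows "CR_rel X f z w"
proof -
  have "\<exists>L::nat. L > 0 \<and> (\<exists>N::nat. N > 0 \<and> (\<forall>n\<ge>N.
        \<exists>xs ys. delta_chain X f \<delta> xs (L*n) \<and> delta_chain X f \<delta> ys (L*n) \<and>
          (\<forall>i\<le>L*n. xs i \<in> CR X f \<and> ys i \<in> CR X f) \<and>
          xs 0 = z \<and> ys (L*n) = z \<and> xs (L*n) = w \<and> ys 0 = w))" if "\<delta> > 0" for \<delta>
  proof -
    obtain cs L t where loop: "delta_chain S (\<lambda>(a, b). (f a, f b)) \<delta> cs L"
      "cs 0 = (z, w)" "cs L = (z, w)" "t < L" "cs t = (p, p)"
      using internally_chain_transitive_loop[OF ict \<open>(z, w) \<in> S\<close> \<open>(p, p) \<in> S\<close> \<open>\<delta> > 0\<close>] .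
    have "\<exists>xs ys. delta_chain X f \<delta> xs (L*n) \<and> delta_chain X f \<delta> ys (L*n) \<and>
          (\<forall>i\<le>L*n. xs i \<in> CR X f \<and> ys i \<in> CR X f) \<and>
          xs 0 = z \<and> ys (L*n) = z \<and> xs (L*n) = w \<and> ys 0 = w" if "n \<ge> 1" for n
      using delta_chains_exchange_through_diagonal[OF loop(1) S loop(2-5) that]
        delta_chain_mono[OF _ CR_subset]
      by (metis delta_chain_def)
    moreover have "L > 0" using loop(4) by simp
    ultimately show ?thesis by (metis One_nat_def zero_less_one)
  qed
  moreover have "z \<in> CR X f" "w \<in> CR X f" using S \<open>(z, w) \<in> S\<close> by auto
  ultimately show ?thesis unfolding CR_rel_def by blast
qed

lemma funpow_pair_map:
  fixes f :: "'a \<Rightarrow> 'a"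
  shows "((\<lambda>(a, b). (f a, f b)) ^^ n) (x, y) = ((f ^^ n) x, (f ^^ n) y)"
  by (induction n) auto

lemma continuous_on_pair_map:
  assumes "continuous_on X f"
  shows "continuous_on (X \<times> X) (\<lambda>(a, b). (f a, f b))"
  unfolding case_prod_beta
  by (intro continuous_on_Pair continuous_on_compose2[OF assms]
        continuous_on_fst continuous_on_snd continuous_on_id) auto

lemma proximal_omega_limit_meets_diagonal:
  fixes f :: "'a::metric_space \<Rightarrow> 'a"
  assumes "compact X" and "f ` X \<subseteq> X" and "x \<in> X" and "y \<in> X"
    and proximal: "liminf (\<lambda>n. ereal (dist ((f ^^ n) x) ((f ^^ n) y))) = 0"
  obtains p where "(p, p) \<in> omega_limit (\<lambda>(a, b). (f a, f b)) (x, y)"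
proof -
  let ?d = "\<lambda>n. dist ((f ^^ n) x) ((f ^^ n) y)"
  obtain r :: "nat \<Rightarrow> nat" where r: "strict_mono r" "(\<lambda>k. ereal (?d (r k))) \<longlonglongrightarrow> 0"
    using liminf_subseq_lim[of "\<lambda>n. ereal (?d n)"] proximal by (auto simp: o_def)
  then have d0: "(\<lambda>k. ?d (r k)) \<longlonglongrightarrow> 0" by (simp add: zero_ereal_def)
  have orbit: "((\<lambda>(a, b). (f a, f b)) ^^ n) (x, y) \<in> X \<times> X" for n
    using assms(2-4) by (intro funpow_in_invariant) auto
  obtain s l where s: "strict_mono s" "l \<in> omega_limit (\<lambda>(a, b). (f a, f b)) (x, y)"
    and "(\<lambda>j. ((\<lambda>(a, b). (f a, f b)) ^^ r (s j)) (x, y)) \<longlonglongrightarrow> l"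
    using omega_limit_subseq[OF compact_Times[OF assms(1,1)] orbit r(1)] .
  then have lim: "(\<lambda>j. ((f ^^ r (s j)) x, (f ^^ r (s j)) y)) \<longlonglongrightarrow> l"
    by (simp add: funpow_pair_map)
  have "(\<lambda>j. ?d (r (s j))) \<longlonglongrightarrow> dist (fst l) (snd l)"
    using tendsto_dist[OF tendsto_fst[OF lim] tendsto_snd[OF lim]] by simp
  moreover have "(\<lambda>j. ?d (r (s j))) \<longlonglongrightarrow> 0"
    using LIMSEQ_subseq_LIMSEQ[OF d0 s(1)] by (simp add: o_def)
  ultimately have "fst l = snd l" using LIMSEQ_unique by fastforce
  then show ?thesis using that s(2) by (metis prod.collapse)
qed

theorem lemmaA1:
  fixes X :: "'a::metric_space set" and f :: "'a \<Rightarrow> 'a" and x y z w :: 'a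
  assumes "compact X" and "continuous_on X f" and "f ` X \<subseteq> X"
    and "x \<in> X" and "y \<in> X"
    and "liminf (\<lambda>n. ereal (dist ((f ^^ n) x) ((f ^^ n) y))) = 0"
    and "(z, w) \<in> omega_limit (\<lambda>(a, b). (f a, f b)) (x, y)"
  shows "z \<in> CR X f \<and> w \<in> CR X f \<and> CR_rel X f z w"
proof -
  let ?g = "\<lambda>(a, b). (f a, f b)" and ?\<Omega> = "omega_limit (\<lambda>(a, b). (f a, f b)) (x, y)"
  have invariant: "?g ` (X \<times> X) \<subseteq> X \<times> X" and start: "(x, y) \<in> X \<times> X"
    using assms(3-5) by auto
  have orbit: "(?g ^^ n) (x, y) \<in> X \<times> X" for n
    using funpow_in_invariant[OF invariant start] .
  have ict: "internally_chain_transitive ?\<Omega> ?g"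
    using omega_limit_internally_chain_transitive[OF compact_Times[OF assms(1,1)]
        continuous_on_pair_map[OF assms(2)] invariant start] .
  have "?\<Omega> \<subseteq> X \<times> X"
    using omega_limit_subset[OF compact_imp_closed[OF compact_Times[OF assms(1,1)]] orbit] .
  then have \<Omega>_CR: "?\<Omega> \<subseteq> CR X f \<times> CR X f"
    using internally_chain_transitive_subset_CR[OF ict] by blast
  obtain p where "(p, p) \<in> ?\<Omega>"
    using proximal_omega_limit_meets_diagonal[OF assms(1,3-6)] .
  then show ?thesis
    using CR_rel_if_internally_chain_transitive[OF ict \<Omega>_CR _ assms(7)] \<Omega>_CR assms(7) by blast
qed

end
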